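(* Let $f:\{0,1\}^n\to\{0,1\}$. Each of the following quantities is at most $s_0(f)s_1(f)$, and $s_0(f)s_1(f)\le s(f)^2$: (i) (Khrapchenko bound) $\frac{|C|^2}{|A||B|}$ for any nonempty $A\subseteq f^{-1}(0)$, $B\subseteq f^{-1}(1)$, where $C=\{(x,y)\in A\times B: d_H(x,y)=1\}$; (ii) (Koutsoupias bound) $\|Q\|_2^2$ for any such $A,B,C$, where $Q$ is the $A\times B$ $0/1$ matrix with $Q[x,y]=1$ iff $(x,y)\in C$; (iii) (H\aa stad bound) $\frac{\Pr[\mathcal{C}\mid\Delta]^2}{\Pr[\mathcal{A}\mid\Delta]\Pr[\mathcal{B}\mid\Delta]}\left(\frac{1-p}{2p}\right)^2$ for any $p\in(0,1)$ and any filter $\Delta$ with $\Pr[\mathcal{A}\mid\Delta],\Pr[\mathcal{B}\mid\Delta]>0$.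
   Context: For an input $x$, the sensitivity of $f$ on $x$ is the number of $i\in[n]$ such that flipping $x_i$ changes $f$. $s_0(f)$ (resp. $s_1(f)$) is the maximum sensitivity over $x\in f^{-1}(0)$ (resp. $f^{-1}(1)$), and $s(f)=\max(s_0(f),s_1(f))$. $d_H$ is Hamming distance, $\|\cdot\|_2$ the spectral norm. A restriction is a string $\rho\in\{0,1,\star\}^n$; $f|_\rho$ is the function of the $\star$-variables obtained by fixing the other variables as in $\rho$. $R_p$ is the distribution on restrictions setting each variable independently to $\star$ with probability $p$ and to $0$, $1$ each with probability $(1-p)/2$. A filter $\Delta$ is a set of restrictions such that if $\rho\in\Delta$ then every restriction obtained from $\rho$ by fixing one $\star$ to a constant is in $\Delta$. For an event $E$, $\Pr[E\mid\Delta]=\Pr_{\rho\sim R_p}[E\mid\rho\in\Delta]$. $\mathcal{A}$ is the event that $f|_\rho$ is the constant $0$, $\mathcal{B}$ the event that $f|_\rho$ is the constant $1$, and $\mathcal{C}$ the event that $f|_\rho$ is a single literal ($x_i$ or $\neg x_i$ for some free variable $x_i$). *)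

theory Defs
  imports Complex_Main
begin

text \<open>Inputs in {0,1}^n are represented as functions nat => bool that are False
  outside {0..<n}. A Boolean function is f :: (nat => bool) => bool, only
  evaluated on the cube.\<close>

definition cube :: "nat \<Rightarrow> (nat \<Rightarrow> bool) set" where
  "cube n = {x. \<forall>i\<ge>n. x i = False}"

definition flip :: "(nat \<Rightarrow> bool) \<Rightarrow> nat \<Rightarrow> (nat \<Rightarrow> bool)" where
  "flip x i = x(i := \<not> x i)"

definition sens_at :: "nat \<Rightarrow> ((nat \<Rightarrow> bool) \<Rightarrow> bool) \<Rightarrow> (nat \<Rightarrow> bool) \<Rightarrow> nat" where
  "sens_at n f x = card {i. i < n \<and> f (flip x i) \<noteq> f x}"

text \<open>s_0 and s_1; the maximum over an empty set is taken to be 0.\<close>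
definition s0 :: "nat \<Rightarrow> ((nat \<Rightarrow> bool) \<Rightarrow> bool) \<Rightarrow> nat" where
  "s0 n f = Max (insert 0 (sens_at n f ` {x \<in> cube n. f x = False}))"

definition s1 :: "nat \<Rightarrow> ((nat \<Rightarrow> bool) \<Rightarrow> bool) \<Rightarrow> nat" where
  "s1 n f = Max (insert 0 (sens_at n f ` {x \<in> cube n. f x = True}))"

definition sens :: "nat \<Rightarrow> ((nat \<Rightarrow> bool) \<Rightarrow> bool) \<Rightarrow> nat" where
  "sens n f = max (s0 n f) (s1 n f)"

definition hamming :: "nat \<Rightarrow> (nat \<Rightarrow> bool) \<Rightarrow> (nat \<Rightarrow> bool) \<Rightarrow> nat" where
  "hamming n x y = card {i. i < n \<and> x i \<noteq> y i}"

definition spec_norm :: "'a set \<Rightarrow> 'b set \<Rightarrow> ('a \<Rightarrow> 'b \<Rightarrow> real) \<Rightarrow> real" where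
  "spec_norm A B Q = Sup {sqrt (\<Sum>x\<in>A. (\<Sum>y\<in>B. Q x y * u y)\<^sup>2) | u. (\<Sum>y\<in>B. (u y)\<^sup>2) = 1}"

text \<open>Restrictions: None = star. Variables i >= n carry None but are never free.\<close>
definition restrictions :: "nat \<Rightarrow> (nat \<Rightarrow> bool option) set" where
  "restrictions n = {\<rho>. \<forall>i\<ge>n. \<rho> i = None}"

definition free_vars :: "nat \<Rightarrow> (nat \<Rightarrow> bool option) \<Rightarrow> nat set" where
  "free_vars n \<rho> = {i. i < n \<and> \<rho> i = None}"

definition apply_restr :: "(nat \<Rightarrow> bool option) \<Rightarrow> (nat \<Rightarrow> bool) \<Rightarrow> (nat \<Rightarrow> bool)" where
  "apply_restr \<rho> y = (\<lambda>i. case \<rho> i of Some b \<Rightarrow> b | None \<Rightarrow> y i)"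

definition is_filter :: "nat \<Rightarrow> (nat \<Rightarrow> bool option) set \<Rightarrow> bool" where
  "is_filter n \<Delta> \<longleftrightarrow> \<Delta> \<subseteq> restrictions n \<and>
     (\<forall>\<rho>\<in>\<Delta>. \<forall>i\<in>free_vars n \<rho>. \<forall>b. \<rho>(i := Some b) \<in> \<Delta>)"

definition Rp_weight :: "nat \<Rightarrow> real \<Rightarrow> (nat \<Rightarrow> bool option) \<Rightarrow> real" where
  "Rp_weight n p \<rho> = p ^ card (free_vars n \<rho>) * ((1 - p) / 2) ^ (n - card (free_vars n \<rho>))"

definition cond_prob :: "nat \<Rightarrow> real \<Rightarrow> ((nat \<Rightarrow> bool option) \<Rightarrow> bool)
    \<Rightarrow> (nat \<Rightarrow> bool option) set \<Rightarrow> real" where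
  "cond_prob n p E \<Delta> = (\<Sum>\<rho>\<in>{\<rho>\<in>\<Delta>. E \<rho>}. Rp_weight n p \<rho>) / (\<Sum>\<rho>\<in>\<Delta>. Rp_weight n p \<rho>)"

definition restr_const :: "nat \<Rightarrow> ((nat \<Rightarrow> bool) \<Rightarrow> bool) \<Rightarrow> bool \<Rightarrow> (nat \<Rightarrow> bool option) \<Rightarrow> bool" where
  "restr_const n f c \<rho> \<longleftrightarrow> (\<forall>y\<in>cube n. f (apply_restr \<rho> y) = c)"

definition restr_literal :: "nat \<Rightarrow> ((nat \<Rightarrow> bool) \<Rightarrow> bool) \<Rightarrow> (nat \<Rightarrow> bool option) \<Rightarrow> bool" where
  "restr_literal n f \<rho> \<longleftrightarrow> (\<exists>i\<in>free_vars n \<rho>.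
      (\<forall>y\<in>cube n. f (apply_restr \<rho> y) = y i) \<or> (\<forall>y\<in>cube n. f (apply_restr \<rho> y) = (\<not> y i)))"

end

theory Submission
  imports Defs "HOL-Analysis.Convex"
begin

(* In the bipartite graph of Hamming neighbours between f^-1(0) and f^-1(1), a 0-input x has at
   most s_0(f) neighbours (each is x with a sensitive bit flipped) and a 1-input at most s_1(f).
   Every bound then has the shape t <= s_0 a and t <= s_1 b, whence t^2/(a b) <= s_0 s_1.
   For Khrapchenko, t = |C| is counted from either side. For Koutsoupias, the Schur test
   (Cauchy-Schwarz with row sums <= s_0 and column sums <= s_1) bounds the spectral norm.
   For Hastad, fixing the variable of a literal restriction rho so that f|rho becomes the
   constant b stays in the filter and multiplies the R_p-weight by (1-p)/(2p); a restriction
   sigma with f|sigma = b is hit at most s_b(f) times, because its preimages free distinct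
   variables, all sensitive at any input consistent with sigma. *)

lemma sq_div_le_of_le_mult:
  fixes t a b r s :: real
  assumes "0 \<le> t" "t \<le> a * r" "t \<le> b * s" "0 < a * b"
  shows "t ^ 2 / (a * b) \<le> r * s"
proof -
  have "t ^ 2 \<le> (a * r) * (b * s)"
    unfolding power2_eq_square using assms by (intro mult_mono) auto
  with assms(4) show ?thesis by (simp add: divide_le_eq mult_ac)
qed

lemma weighted_Cauchy_Schwarz:
  fixes w u :: "'a \<Rightarrow> real"
  assumes "\<forall>i\<in>I. 0 \<le> w i"
  shows "(\<Sum>i\<in>I. w i * u i)\<^sup>2 \<le> (\<Sum>i\<in>I. w i) * (\<Sum>i\<in>I. w i * (u i)\<^sup>2)"
proof -
  have "(\<Sum>i\<in>I. w i * u i)\<^sup>2 = (\<Sum>i\<in>I. sqrt (w i) * (sqrt (w i) * u i))\<^sup>2"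
    using assms by (simp flip: mult.assoc)
  also have "\<dots> \<le> (\<Sum>i\<in>I. (sqrt (w i))\<^sup>2) * (\<Sum>i\<in>I. (sqrt (w i) * u i)\<^sup>2)"
    by (rule Cauchy_Schwarz_ineq_sum)
  also have "\<dots> = (\<Sum>i\<in>I. w i) * (\<Sum>i\<in>I. w i * (u i)\<^sup>2)"
    using assms by (simp add: power_mult_distrib)
  finally show ?thesis .
qed

lemma Schur_test:
  fixes Q :: "'a \<Rightarrow> 'b \<Rightarrow> real"
  assumes nonneg: "\<forall>x\<in>A. \<forall>y\<in>B. 0 \<le> Q x y" and "0 \<le> r"
    and rows: "\<forall>x\<in>A. (\<Sum>y\<in>B. Q x y) \<le> r" and cols: "\<forall>y\<in>B. (\<Sum>x\<in>A. Q x y) \<le> c"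
  shows "(\<Sum>x\<in>A. (\<Sum>y\<in>B. Q x y * u y)\<^sup>2) \<le> r * c * (\<Sum>y\<in>B. (u y)\<^sup>2)"
proof -
  have "(\<Sum>x\<in>A. (\<Sum>y\<in>B. Q x y * u y)\<^sup>2) \<le> (\<Sum>x\<in>A. (\<Sum>y\<in>B. Q x y) * (\<Sum>y\<in>B. Q x y * (u y)\<^sup>2))"
    using nonneg by (intro sum_mono weighted_Cauchy_Schwarz) auto
  also have "\<dots> \<le> (\<Sum>x\<in>A. r * (\<Sum>y\<in>B. Q x y * (u y)\<^sup>2))"
    using nonneg rows by (intro sum_mono mult_right_mono sum_nonneg) auto
  also have "\<dots> = r * (\<Sum>y\<in>B. (u y)\<^sup>2 * (\<Sum>x\<in>A. Q x y))"
    by (simp add: sum_distrib_left sum_distrib_right sum.swap[of _ A] mult_ac)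
  also have "\<dots> \<le> r * (\<Sum>y\<in>B. (u y)\<^sup>2 * c)"
    using cols \<open>0 \<le> r\<close> by (intro mult_left_mono sum_mono) auto
  also have "\<dots> = r * c * (\<Sum>y\<in>B. (u y)\<^sup>2)"
    by (simp add: sum_distrib_left sum_distrib_right mult_ac)
  finally show ?thesis .
qed

lemma spec_norm_sq_le:
  assumes "finite B" "B \<noteq> {}"
    and bound: "\<And>u. (\<Sum>y\<in>B. (u y)\<^sup>2) = 1 \<Longrightarrow> (\<Sum>x\<in>A. (\<Sum>y\<in>B. Q x y * u y)\<^sup>2) \<le> M"
  shows "spec_norm A B Q ^ 2 \<le> M"
proof -
  define S where "S = {sqrt (\<Sum>x\<in>A. (\<Sum>y\<in>B. Q x y * u y)\<^sup>2) | u. (\<Sum>y\<in>B. (u y)\<^sup>2) = 1}"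
  obtain y0 where "y0 \<in> B" using assms(2) by blast
  define e :: "_ \<Rightarrow> real" where "e y = (if y = y0 then 1 else 0)" for y
  have "(e y)\<^sup>2 = e y" for y
    by (simp add: e_def)
  then have e: "(\<Sum>y\<in>B. (e y)\<^sup>2) = 1"
    using assms(1) \<open>y0 \<in> B\<close> by (simp add: e_def)
  then have e_in: "sqrt (\<Sum>x\<in>A. (\<Sum>y\<in>B. Q x y * e y)\<^sup>2) \<in> S"
    unfolding S_def by blast
  have ub: "s \<le> sqrt M" if "s \<in> S" for s
    using that bound unfolding S_def by auto
  have "0 \<le> Sup S"
    using e_in ub by (intro order_trans[OF _ cSup_upper[OF e_in]] bdd_aboveI[of S]) (auto intro: sum_nonneg)
  moreover have "Sup S \<le> sqrt M"
    using e_in ub by (intro cSup_least) auto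
  moreover have "0 \<le> M"
    using bound[OF e] by (meson order_trans sum_nonneg zero_le_power2)
  ultimately show ?thesis
    unfolding spec_norm_def S_def[symmetric] by (metis power_mono real_sqrt_pow2)
qed

lemma sum_comp_le_fibre_bound:
  fixes w :: "'b \<Rightarrow> real" and k :: nat
  assumes "finite S" "finite T" "g ` S \<subseteq> T" "\<forall>t\<in>T. 0 \<le> w t"
    and fibres: "\<forall>t\<in>T. card {s\<in>S. g s = t} \<le> k"
  shows "(\<Sum>s\<in>S. w (g s)) \<le> real k * (\<Sum>t\<in>T. w t)"
proof -
  have "(\<Sum>s\<in>S. w (g s)) = (\<Sum>t\<in>T. \<Sum>s\<in>{s\<in>S. g s = t}. w (g s))"
    using assms(1-3) by (rule sum.group[symmetric])
  also have "\<dots> = (\<Sum>t\<in>T. card {s\<in>S. g s = t} * w t)"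
    by (intro sum.cong) auto
  also have "\<dots> \<le> (\<Sum>t\<in>T. k * w t)"
    using assms(4) fibres by (intro sum_mono mult_right_mono) auto
  finally show ?thesis
    by (simp add: sum_distrib_left)
qed

lemma finite_funs_eq_outside: "finite {x :: nat \<Rightarrow> 'a::finite. \<forall>i\<ge>n. x i = c}"
proof -
  have eq: "{x :: nat \<Rightarrow> 'a. \<forall>i\<ge>n. x i = c}
      = {x. \<forall>i. (i \<in> {..<n} \<longrightarrow> x i \<in> UNIV) \<and> (i \<notin> {..<n} \<longrightarrow> x i = c)}"
    by (auto simp: not_less)
  show ?thesis unfolding eq by (rule finite_set_of_finite_funs) auto
qed

lemma finite_cube: "finite (cube n)"
  unfolding cube_def by (rule finite_funs_eq_outside)

lemma finite_subset_cube: "A \<subseteq> {x \<in> cube n. P x} \<Longrightarrow> finite A"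
  using finite_cube by (rule finite_subset[rotated]) auto

lemma finite_restrictions: "finite (restrictions n)"
  unfolding restrictions_def by (rule finite_funs_eq_outside)

definition max_sens :: "nat \<Rightarrow> ((nat \<Rightarrow> bool) \<Rightarrow> bool) \<Rightarrow> bool \<Rightarrow> nat" where
  "max_sens n f b = Max (insert 0 (sens_at n f ` {x \<in> cube n. f x = b}))"

lemma s0_eq_max_sens: "s0 n f = max_sens n f False"
  by (simp add: s0_def max_sens_def)

lemma s1_eq_max_sens: "s1 n f = max_sens n f True"
  by (simp add: s1_def max_sens_def)

lemma sens_at_le_max_sens: "x \<in> cube n \<Longrightarrow> sens_at n f x \<le> max_sens n f (f x)"
  unfolding max_sens_def by (rule Max_ge) (auto simp: finite_cube)

lemma s0_mult_s1_le_sens_sq: "real (s0 n f * s1 n f) \<le> real (sens n f) ^ 2"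
proof -
  have "s0 n f * s1 n f \<le> sens n f * sens n f"
    unfolding sens_def by (intro mult_mono) auto
  then show ?thesis by (simp add: power2_eq_square flip: of_nat_mult)
qed

lemma hamming_commute: "hamming n x y = hamming n y x"
  unfolding hamming_def by metis

lemma hamming_eq_1_imp_flip:
  assumes "x \<in> cube n" "y \<in> cube n" "hamming n x y = 1"
  obtains i where "i < n" "y = flip x i"
proof -
  from assms(3) obtain i where i: "{j. j < n \<and> x j \<noteq> y j} = {i}"
    unfolding hamming_def by (auto simp: card_1_singleton_iff)
  have "y j = flip x i j" for j
    using i assms(1,2) by (cases "j < n") (auto simp: flip_def cube_def)
  with i that show ?thesis by blast
qed

lemma card_hamming_neighbours_le_sens_at:
  assumes "x \<in> cube n" "Y \<subseteq> cube n" "\<forall>y\<in>Y. f y \<noteq> f x"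
  shows "card {y\<in>Y. hamming n x y = 1} \<le> sens_at n f x"
proof -
  have "{y\<in>Y. hamming n x y = 1} \<subseteq> flip x ` {i. i < n \<and> f (flip x i) \<noteq> f x}"
    using assms by (fastforce elim: hamming_eq_1_imp_flip)
  then have "card {y\<in>Y. hamming n x y = 1} \<le> card (flip x ` {i. i < n \<and> f (flip x i) \<noteq> f x})"
    by (intro card_mono) auto
  also have "\<dots> \<le> sens_at n f x"
    unfolding sens_at_def by (rule card_image_le) simp
  finally show ?thesis .
qed

definition hamming_adj :: "nat \<Rightarrow> (nat \<Rightarrow> bool) \<Rightarrow> (nat \<Rightarrow> bool) \<Rightarrow> real" where
  "hamming_adj n x y = (if hamming n x y = 1 then 1 else 0)"

lemma hamming_adj_commute: "hamming_adj n x y = hamming_adj n y x"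
  by (simp add: hamming_adj_def hamming_commute)

lemma hamming_adj_nonneg: "0 \<le> hamming_adj n x y"
  by (simp add: hamming_adj_def)

lemma sum_hamming_adj_eq_card: "finite Y \<Longrightarrow> (\<Sum>y\<in>Y. hamming_adj n x y) = real (card {y\<in>Y. hamming n x y = 1})"
  by (simp add: hamming_adj_def sum.If_cases Collect_conj_eq Int_commute)

lemma sum_hamming_adj_le_max_sens:
  assumes "x \<in> cube n" "Y \<subseteq> cube n" "\<forall>y\<in>Y. f y \<noteq> f x"
  shows "(\<Sum>y\<in>Y. hamming_adj n x y) \<le> max_sens n f (f x)"
proof -
  have "finite Y" using assms(2) finite_cube finite_subset by blast
  then have "(\<Sum>y\<in>Y. hamming_adj n x y) = real (card {y\<in>Y. hamming n x y = 1})"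
    by (rule sum_hamming_adj_eq_card)
  also have "\<dots> \<le> sens_at n f x"
    using card_hamming_neighbours_le_sens_at[OF assms] by simp
  also have "\<dots> \<le> max_sens n f (f x)"
    using sens_at_le_max_sens[OF assms(1)] by simp
  finally show ?thesis .
qed

lemma hamming_adj_row_sums_le_s0:
  assumes "A \<subseteq> {x \<in> cube n. f x = False}" "B \<subseteq> {x \<in> cube n. f x = True}" "x \<in> A"
  shows "(\<Sum>y\<in>B. hamming_adj n x y) \<le> s0 n f"
proof -
  have "x \<in> cube n" "\<not> f x" "B \<subseteq> cube n" "\<forall>y\<in>B. f y \<noteq> f x"
    using assms by auto
  then show ?thesis using sum_hamming_adj_le_max_sens[of x n B f] by (simp add: s0_eq_max_sens)
qed

lemma hamming_adj_col_sums_le_s1: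
  assumes "A \<subseteq> {x \<in> cube n. f x = False}" "B \<subseteq> {x \<in> cube n. f x = True}" "y \<in> B"
  shows "(\<Sum>x\<in>A. hamming_adj n x y) \<le> s1 n f"
proof -
  have "y \<in> cube n" "f y" "A \<subseteq> cube n" "\<forall>x\<in>A. f x \<noteq> f y"
    using assms by auto
  then show ?thesis using sum_hamming_adj_le_max_sens[of y n A f] by (simp add: s1_eq_max_sens hamming_adj_commute)
qed

lemma card_hamming_edges_eq_sum_adj:
  assumes "finite A" "finite B"
  shows "real (card {(x, y). x \<in> A \<and> y \<in> B \<and> hamming n x y = 1}) = (\<Sum>x\<in>A. \<Sum>y\<in>B. hamming_adj n x y)"
proof -
  have "{(x, y). x \<in> A \<and> y \<in> B \<and> hamming n x y = 1} = Sigma A (\<lambda>x. {y\<in>B. hamming n x y = 1})"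
    by auto
  then show ?thesis
    using assms by (simp add: card_SigmaI sum_hamming_adj_eq_card)
qed

lemma khrapchenko_bound:
  assumes "A \<noteq> {}" "B \<noteq> {}" "A \<subseteq> {x \<in> cube n. f x = False}" "B \<subseteq> {x \<in> cube n. f x = True}"
  shows "real (card {(x, y). x \<in> A \<and> y \<in> B \<and> hamming n x y = 1}) ^ 2
    / (real (card A) * real (card B)) \<le> real (s0 n f * s1 n f)"
proof -
  have "finite A" "finite B"
    using assms(3,4) by (auto intro: finite_subset_cube)
  define t where "t = (\<Sum>x\<in>A. \<Sum>y\<in>B. hamming_adj n x y)"
  have t_swap: "t = (\<Sum>y\<in>B. \<Sum>x\<in>A. hamming_adj n x y)"
    unfolding t_def by (rule sum.swap)
  have "0 \<le> t"
    unfolding t_def by (intro sum_nonneg hamming_adj_nonneg)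
  moreover have "t \<le> card A * real (s0 n f)"
    unfolding t_def using hamming_adj_row_sums_le_s0[OF assms(3,4)] by (rule sum_bounded_above)
  moreover have "t \<le> card B * real (s1 n f)"
    unfolding t_swap using hamming_adj_col_sums_le_s1[OF assms(3,4)] by (rule sum_bounded_above)
  moreover have "0 < real (card A) * real (card B)"
    using assms(1,2) \<open>finite A\<close> \<open>finite B\<close> by (simp add: card_gt_0_iff)
  ultimately have "t ^ 2 / (real (card A) * real (card B)) \<le> real (s0 n f) * real (s1 n f)"
    by (rule sq_div_le_of_le_mult)
  then show ?thesis
    using card_hamming_edges_eq_sum_adj[OF \<open>finite A\<close> \<open>finite B\<close>] by (simp add: t_def)
qed

lemma koutsoupias_bound:
  assumes "B \<noteq> {}" "A \<subseteq> {x \<in> cube n. f x = False}" "B \<subseteq> {x \<in> cube n. f x = True}"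
  shows "(spec_norm A B (\<lambda>x y. if hamming n x y = 1 then 1 else 0)) ^ 2 \<le> real (s0 n f * s1 n f)"
proof -
  have "finite B"
    using assms(3) by (rule finite_subset_cube)
  have "(\<Sum>x\<in>A. (\<Sum>y\<in>B. hamming_adj n x y * u y)\<^sup>2) \<le> real (s0 n f * s1 n f)"
    if "(\<Sum>y\<in>B. (u y)\<^sup>2) = 1" for u
  proof -
    have "(\<Sum>x\<in>A. (\<Sum>y\<in>B. hamming_adj n x y * u y)\<^sup>2) \<le> real (s0 n f) * real (s1 n f) * (\<Sum>y\<in>B. (u y)\<^sup>2)"
      using hamming_adj_row_sums_le_s0[OF assms(2,3)] hamming_adj_col_sums_le_s1[OF assms(2,3)]
      by (intro Schur_test) (simp_all add: hamming_adj_nonneg)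
    with that show ?thesis
      by simp
  qed
  with \<open>finite B\<close> assms(1) have "spec_norm A B (hamming_adj n) ^ 2 \<le> real (s0 n f * s1 n f)"
    by (rule spec_norm_sq_le)
  moreover have "(\<lambda>x y. if hamming n x y = 1 then 1 else 0) = hamming_adj n"
    by (simp add: hamming_adj_def fun_eq_iff)
  ultimately show ?thesis
    by simp
qed

lemma Rp_weight_nonneg: "0 \<le> p \<Longrightarrow> p \<le> 1 \<Longrightarrow> 0 \<le> Rp_weight n p \<rho>"
  by (simp add: Rp_weight_def)

lemma cond_prob_nonneg: "0 \<le> p \<Longrightarrow> p \<le> 1 \<Longrightarrow> 0 \<le> cond_prob n p E \<Delta>"
  unfolding cond_prob_def by (intro divide_nonneg_nonneg sum_nonneg Rp_weight_nonneg)

lemma Rp_weight_fix_free_var: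
  assumes "0 < p" "i \<in> free_vars n \<rho>"
  shows "Rp_weight n p (\<rho>(i := Some b)) = Rp_weight n p \<rho> * ((1 - p) / (2 * p))"
proof -
  define k where "k = card (free_vars n \<rho>)"
  have sub: "free_vars n \<rho> \<subseteq> {..<n}"
    by (auto simp: free_vars_def)
  then have "finite (free_vars n \<rho>)"
    by (rule finite_subset) simp
  have "k \<le> n"
    unfolding k_def using card_mono[OF _ sub] by simp
  moreover have "free_vars n (\<rho>(i := Some b)) = free_vars n \<rho> - {i}"
    by (auto simp: free_vars_def)
  ultimately have "card (free_vars n (\<rho>(i := Some b))) = k - 1" "0 < k"
    using assms(2) \<open>finite (free_vars n \<rho>)\<close> unfolding k_def by (auto simp: card_gt_0_iff)
  moreover obtain m where "n = k + m"
    using \<open>k \<le> n\<close> le_Suc_ex by blast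
  ultimately show ?thesis
    unfolding Rp_weight_def k_def[symmetric] using assms(1)
    by (cases k) (simp_all add: field_simps)
qed

lemma apply_restr_fix: "\<rho> i = None \<Longrightarrow> apply_restr (\<rho>(i := Some b)) y = apply_restr \<rho> (y(i := b))"
  by (auto simp: apply_restr_def fun_eq_iff split: option.splits)

lemma apply_restr_in_cube: "\<rho> \<in> restrictions n \<Longrightarrow> y \<in> cube n \<Longrightarrow> apply_restr \<rho> y \<in> cube n"
  by (auto simp: apply_restr_def cube_def restrictions_def)

lemma fun_upd_in_cube: "y \<in> cube n \<Longrightarrow> i < n \<Longrightarrow> y(i := b) \<in> cube n"
  by (auto simp: cube_def)

text \<open>The literal \<open>(i, c)\<close> with \<open>f|\<rho> = (x\<^sub>i = c)\<close>; unspecified unless \<^term>\<open>restr_literal n f \<rho>\<close>.\<close>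
definition literal_of ::
    "nat \<Rightarrow> ((nat \<Rightarrow> bool) \<Rightarrow> bool) \<Rightarrow> (nat \<Rightarrow> bool option) \<Rightarrow> nat \<times> bool" where
  "literal_of n f \<rho> = (SOME (i, c). i \<in> free_vars n \<rho> \<and> (\<forall>y\<in>cube n. f (apply_restr \<rho> y) = (y i = c)))"

lemma restr_literalE:
  assumes "restr_literal n f \<rho>"
  obtains i c where "literal_of n f \<rho> = (i, c)" "i \<in> free_vars n \<rho>"
    "\<forall>y\<in>cube n. f (apply_restr \<rho> y) = (y i = c)"
proof -
  from assms obtain i c where "i \<in> free_vars n \<rho>" "\<forall>y\<in>cube n. f (apply_restr \<rho> y) = (y i = c)"
    unfolding restr_literal_def by (metis (full_types))
  then have "\<exists>ic. case ic of (i, c) \<Rightarrow> i \<in> free_vars n \<rho> \<and> (\<forall>y\<in>cube n. f (apply_restr \<rho> y) = (y i = c))"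
    by blast
  from someI_ex[OF this] that show ?thesis
    unfolding literal_of_def by (auto split: prod.splits)
qed

definition fix_literal ::
    "nat \<Rightarrow> ((nat \<Rightarrow> bool) \<Rightarrow> bool) \<Rightarrow> bool \<Rightarrow> (nat \<Rightarrow> bool option) \<Rightarrow> (nat \<Rightarrow> bool option)" where
  "fix_literal n f d \<rho> = (case literal_of n f \<rho> of (i, c) \<Rightarrow> \<rho>(i := Some (c = d)))"

lemma fix_literal_in_filter_const:
  assumes "is_filter n \<Delta>" "\<rho> \<in> \<Delta>" "restr_literal n f \<rho>"
  shows "fix_literal n f d \<rho> \<in> \<Delta>" "restr_const n f d (fix_literal n f d \<rho>)"
proof -
  obtain i c where lit: "literal_of n f \<rho> = (i, c)" "i \<in> free_vars n \<rho>"
    and val: "\<forall>y\<in>cube n. f (apply_restr \<rho> y) = (y i = c)"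
    using assms(3) by (rule restr_literalE)
  then have "\<rho> i = None" "i < n"
    by (auto simp: free_vars_def)
  show "fix_literal n f d \<rho> \<in> \<Delta>"
    using assms(1,2) lit unfolding is_filter_def fix_literal_def by auto
  show "restr_const n f d (fix_literal n f d \<rho>)"
    unfolding restr_const_def fix_literal_def lit
    using val \<open>\<rho> i = None\<close> \<open>i < n\<close> by (cases d) (simp_all add: apply_restr_fix fun_upd_in_cube)
qed

lemma Rp_weight_fix_literal:
  assumes "0 < p" "restr_literal n f \<rho>"
  shows "Rp_weight n p (fix_literal n f d \<rho>) = Rp_weight n p \<rho> * ((1 - p) / (2 * p))"
  using assms(2) by (rule restr_literalE) (simp add: fix_literal_def Rp_weight_fix_free_var[OF assms(1)])

text \<open>The variable freed by a preimage is sensitive at \<open>x\<close>: flipping it turns the literal from its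
  value \<open>d\<close> on \<open>\<sigma>\<close> to \<open>\<not> d\<close>.\<close>
lemma fix_literal_fibre_subset:
  assumes "restr_const n f d \<sigma>"
  defines "x \<equiv> apply_restr \<sigma> (\<lambda>_. False)"
  shows "{\<rho>. restr_literal n f \<rho> \<and> fix_literal n f d \<rho> = \<sigma>}
    \<subseteq> (\<lambda>i. \<sigma>(i := None)) ` {i. i < n \<and> f (flip x i) \<noteq> f x}"
proof
  fix \<rho> assume "\<rho> \<in> {\<rho>. restr_literal n f \<rho> \<and> fix_literal n f d \<rho> = \<sigma>}"
  then have "restr_literal n f \<rho>" and \<sigma>: "fix_literal n f d \<rho> = \<sigma>"
    by auto
  from \<open>restr_literal n f \<rho>\<close> obtain i c where lit: "literal_of n f \<rho> = (i, c)" "i \<in> free_vars n \<rho>"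
    and val: "\<forall>y\<in>cube n. f (apply_restr \<rho> y) = (y i = c)"
    by (rule restr_literalE)
  then have "\<rho> i = None" "i < n"
    by (auto simp: free_vars_def)
  have \<sigma>_eq: "\<sigma> = \<rho>(i := Some (c = d))"
    using \<sigma> lit by (simp add: fix_literal_def)
  have "(\<lambda>_. False)(i := b) \<in> cube n" for b
    using \<open>i < n\<close> by (simp add: fun_upd_in_cube cube_def)
  then have "f (apply_restr \<rho> ((\<lambda>_. False)(i := b))) = (b = c)" for b
    using val by simp
  moreover have "x = apply_restr \<rho> ((\<lambda>_. False)(i := c = d))"
    "flip x i = apply_restr \<rho> ((\<lambda>_. False)(i := c \<noteq> d))"
    using \<open>\<rho> i = None\<close> unfolding x_def \<sigma>_eq flip_def
    by (auto simp: apply_restr_def fun_eq_iff split: option.splits)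
  ultimately have "f (flip x i) \<noteq> f x"
    by auto
  moreover have "\<rho> = \<sigma>(i := None)"
    using \<sigma>_eq \<open>\<rho> i = None\<close> by auto
  ultimately show "\<rho> \<in> (\<lambda>i. \<sigma>(i := None)) ` {i. i < n \<and> f (flip x i) \<noteq> f x}"
    using \<open>i < n\<close> by blast
qed

lemma card_fix_literal_fibre_le:
  assumes "\<sigma> \<in> restrictions n" "restr_const n f d \<sigma>"
  shows "card {\<rho>\<in>R. restr_literal n f \<rho> \<and> fix_literal n f d \<rho> = \<sigma>} \<le> max_sens n f d"
proof -
  define x where "x = apply_restr \<sigma> (\<lambda>_. False)"
  have "(\<lambda>_. False) \<in> cube n"
    by (simp add: cube_def)
  then have "x \<in> cube n" "f x = d"
    using assms unfolding x_def restr_const_def by (simp_all add: apply_restr_in_cube)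
  have "{\<rho>\<in>R. restr_literal n f \<rho> \<and> fix_literal n f d \<rho> = \<sigma>}
      \<subseteq> (\<lambda>i. \<sigma>(i := None)) ` {i. i < n \<and> f (flip x i) \<noteq> f x}"
    using fix_literal_fibre_subset[OF assms(2)] unfolding x_def by blast
  then have "card {\<rho>\<in>R. restr_literal n f \<rho> \<and> fix_literal n f d \<rho> = \<sigma>}
      \<le> card ((\<lambda>i. \<sigma>(i := None)) ` {i. i < n \<and> f (flip x i) \<noteq> f x})"
    by (rule card_mono[rotated]) simp
  also have "\<dots> \<le> sens_at n f x"
    unfolding sens_at_def by (rule card_image_le) simp
  also have "\<dots> \<le> max_sens n f d"
    using sens_at_le_max_sens[of x n f] \<open>x \<in> cube n\<close> \<open>f x = d\<close> by simp
  finally show ?thesis .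
qed

lemma cond_prob_literal_le:
  assumes "0 < p" "p < 1" "is_filter n \<Delta>"
  shows "cond_prob n p (restr_literal n f) \<Delta> * ((1 - p) / (2 * p))
    \<le> max_sens n f d * cond_prob n p (restr_const n f d) \<Delta>"
proof -
  let ?w = "Rp_weight n p"
  let ?C = "{\<rho>\<in>\<Delta>. restr_literal n f \<rho>}" and ?D = "{\<sigma>\<in>\<Delta>. restr_const n f d \<sigma>}"
  have "\<Delta> \<subseteq> restrictions n"
    using assms(3) by (simp add: is_filter_def)
  then have "finite \<Delta>"
    using finite_restrictions finite_subset by blast
  have maps: "fix_literal n f d ` ?C \<subseteq> ?D"
    using fix_literal_in_filter_const[OF assms(3)] by blast
  have fibres: "\<forall>\<sigma>\<in>?D. card {\<rho>\<in>?C. fix_literal n f d \<rho> = \<sigma>} \<le> max_sens n f d"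
    using card_fix_literal_fibre_le[where R = \<Delta>] \<open>\<Delta> \<subseteq> restrictions n\<close>
    by (auto simp: conj_assoc)
  have "(\<Sum>\<rho>\<in>?C. ?w \<rho>) * ((1 - p) / (2 * p)) = (\<Sum>\<rho>\<in>?C. ?w (fix_literal n f d \<rho>))"
    unfolding sum_distrib_right using assms(1) by (intro sum.cong) (simp_all add: Rp_weight_fix_literal)
  also have "\<dots> \<le> max_sens n f d * (\<Sum>\<sigma>\<in>?D. ?w \<sigma>)"
    using \<open>finite \<Delta>\<close> assms(1,2)
    by (intro sum_comp_le_fibre_bound[OF _ _ maps _ fibres]) (simp_all add: Rp_weight_nonneg)
  finally have "(\<Sum>\<rho>\<in>?C. ?w \<rho>) * ((1 - p) / (2 * p)) / (\<Sum>\<rho>\<in>\<Delta>. ?w \<rho>)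
      \<le> max_sens n f d * (\<Sum>\<sigma>\<in>?D. ?w \<sigma>) / (\<Sum>\<rho>\<in>\<Delta>. ?w \<rho>)"
    using assms(1,2) by (intro divide_right_mono sum_nonneg Rp_weight_nonneg) auto
  then show ?thesis
    by (simp add: cond_prob_def ac_simps)
qed

lemma hastad_bound:
  assumes "0 < p" "p < 1" "is_filter n \<Delta>"
    and "cond_prob n p (restr_const n f False) \<Delta> > 0" "cond_prob n p (restr_const n f True) \<Delta> > 0"
  shows "cond_prob n p (restr_literal n f) \<Delta> ^ 2
      / (cond_prob n p (restr_const n f False) \<Delta> * cond_prob n p (restr_const n f True) \<Delta>)
      * ((1 - p) / (2 * p)) ^ 2
    \<le> real (s0 n f * s1 n f)"
proof -
  let ?a = "cond_prob n p (restr_const n f False) \<Delta>" and ?b = "cond_prob n p (restr_const n f True) \<Delta>"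
  let ?t = "cond_prob n p (restr_literal n f) \<Delta> * ((1 - p) / (2 * p))"
  have "cond_prob n p (restr_literal n f) \<Delta> ^ 2 / (?a * ?b) * ((1 - p) / (2 * p)) ^ 2 = ?t ^ 2 / (?a * ?b)"
    by (simp only: power_mult_distrib times_divide_eq_left)
  also have "\<dots> \<le> real (s0 n f) * real (s1 n f)"
  proof (rule sq_div_le_of_le_mult)
    show "0 \<le> ?t"
      using assms(1,2) cond_prob_nonneg by simp
    show "?t \<le> ?a * real (s0 n f)"
      using cond_prob_literal_le[OF assms(1-3), of f False] by (simp add: s0_eq_max_sens mult.commute)
    show "?t \<le> ?b * real (s1 n f)"
      using cond_prob_literal_le[OF assms(1-3), of f True] by (simp add: s1_eq_max_sens mult.commute)
    show "0 < ?a * ?b"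
      using assms(4,5) by simp
  qed
  finally show ?thesis
    by simp
qed

theorem mainTheorem11:
  fixes n :: nat and f :: "(nat \<Rightarrow> bool) \<Rightarrow> bool"
  shows "real (s0 n f * s1 n f) \<le> real (sens n f) ^ 2
    \<and> (\<forall>A B. A \<noteq> {} \<longrightarrow> B \<noteq> {} \<longrightarrow>
          A \<subseteq> {x \<in> cube n. f x = False} \<longrightarrow> B \<subseteq> {x \<in> cube n. f x = True} \<longrightarrow>
          real (card {(x, y). x \<in> A \<and> y \<in> B \<and> hamming n x y = 1}) ^ 2
            / (real (card A) * real (card B)) \<le> real (s0 n f * s1 n f))
    \<and> (\<forall>A B. A \<noteq> {} \<longrightarrow> B \<noteq> {} \<longrightarrow>
          A \<subseteq> {x \<in> cube n. f x = False} \<longrightarrow> B \<subseteq> {x \<in> cube n. f x = True} \<longrightarrow>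
          (spec_norm A B (\<lambda>x y. if hamming n x y = 1 then 1 else 0)) ^ 2
            \<le> real (s0 n f * s1 n f))
    \<and> (\<forall>p \<Delta>. 0 < p \<longrightarrow> p < 1 \<longrightarrow> is_filter n \<Delta> \<longrightarrow>
          cond_prob n p (restr_const n f False) \<Delta> > 0 \<longrightarrow>
          cond_prob n p (restr_const n f True) \<Delta> > 0 \<longrightarrow>
          cond_prob n p (restr_literal n f) \<Delta> ^ 2
            / (cond_prob n p (restr_const n f False) \<Delta> * cond_prob n p (restr_const n f True) \<Delta>)
            * ((1 - p) / (2 * p)) ^ 2
          \<le> real (s0 n f * s1 n f))"
  by (intro conjI allI impI s0_mult_s1_le_sens_sq khrapchenko_bound koutsoupias_bound hastad_bound)

end
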